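(* Let $r\le s$ be integers, $n=s-r+1$, $\beta_r,\dots,\beta_s$ pairwise distinct real numbers, $B_j=e^{\beta_j}$. For $1\le k\le n$ and $r\le i\le s$ let $$I_{ki}=2i^{2r-s+1-i}\int\frac{d\alpha}{2\pi}\,e^{(k-\frac{n+1}{2})\alpha}\prod_{j=r}^{i}\frac{1}{2\cosh\frac12(\alpha-\beta_j)}\prod_{j=i}^{s}\frac{1}{2\sinh\frac12(\alpha-\beta_j)}$$ (integral along a horizontal line slightly above the real axis), $J_{ki}=I_{ki}+(-1)^{s+i}\overline{I_{ki}}$, and $$F_{ji}=\frac{1}{\prod_{k=r,k\ne j}^{i}(B_j-B_k)\prod_{k=i}^{s}(B_j+B_k)}\ (r\le j\le i),\qquad G_{ji}=\frac{(-1)^n}{\prod_{k=r}^{i}(B_j+B_k)\prod_{k=i,k\ne j}^{s}(B_j-B_k)}\ (i\le j\le s).$$ Then $$I_{ki}=\frac{i^{s+1-i}}{\pi}B_i^{1/2}\Big(\prod_{j=r}^sB_j\Big)^{1/2}\Big(\sum_{j=r}^{i}(-B_j)^{k-1}\beta_jF_{ji}+\sum_{j=i}^{s}B_j^{k-1}(\beta_j+\pi i)G_{ji}\Big),$$ $$J_{ki}=2i^{s-i}B_i^{1/2}\Big(\prod_{j=r}^sB_j\Big)^{1/2}\sum_{j=r}^{i}(-B_j)^{k-1}F_{ji}=-2i^{s-i}B_i^{1/2}\Big(\prod_{j=r}^sB_j\Big)^{1/2}\sum_{j=i}^{s}B_j^{k-1}G_{ji}.$$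
   Context: $i=\sqrt{-1}$ where it appears as a base of powers; $B_j^{1/2}=e^{\beta_j/2}$; the bar denotes complex conjugation. *)

theory Defs
  imports "HOL-Analysis.Analysis"
begin

definition nn :: "int \<Rightarrow> int \<Rightarrow> nat" where
  "nn r s = nat (s - r + 1)"

definition integrandI :: "int \<Rightarrow> int \<Rightarrow> (int \<Rightarrow> real) \<Rightarrow> nat \<Rightarrow> int \<Rightarrow> complex \<Rightarrow> complex" where
  "integrandI r s \<beta> k i z =
     exp (complex_of_real (real k - (real (nn r s) + 1) / 2) * z)
     * (\<Prod>j\<in>{r..i}. 1 / (2 * cosh ((z - complex_of_real (\<beta> j)) / 2)))
     * (\<Prod>j\<in>{i..s}. 1 / (2 * sinh ((z - complex_of_real (\<beta> j)) / 2)))"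

definition Ival :: "int \<Rightarrow> int \<Rightarrow> (int \<Rightarrow> real) \<Rightarrow> real \<Rightarrow> nat \<Rightarrow> int \<Rightarrow> complex" where
  "Ival r s \<beta> \<epsilon> k i =
     2 * \<i> powi (2 * r - s + 1 - i)
     * (integral UNIV (\<lambda>t::real. integrandI r s \<beta> k i (complex_of_real t + \<i> * complex_of_real \<epsilon>))
        / complex_of_real (2 * pi))"

definition Jval :: "int \<Rightarrow> int \<Rightarrow> (int \<Rightarrow> real) \<Rightarrow> real \<Rightarrow> nat \<Rightarrow> int \<Rightarrow> complex" where
  "Jval r s \<beta> \<epsilon> k i = Ival r s \<beta> \<epsilon> k i + (-1) powi (s + i) * cnj (Ival r s \<beta> \<epsilon> k i)"

definition Fco :: "int \<Rightarrow> int \<Rightarrow> (int \<Rightarrow> real) \<Rightarrow> int \<Rightarrow> int \<Rightarrow> real" where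
  "Fco r s \<beta> j i = 1 / ((\<Prod>k\<in>{r..i} - {j}. exp (\<beta> j) - exp (\<beta> k))
                         * (\<Prod>k\<in>{i..s}. exp (\<beta> j) + exp (\<beta> k)))"

definition Gco :: "int \<Rightarrow> int \<Rightarrow> (int \<Rightarrow> real) \<Rightarrow> int \<Rightarrow> int \<Rightarrow> real" where
  "Gco r s \<beta> j i = (-1) ^ nn r s / ((\<Prod>k\<in>{r..i}. exp (\<beta> j) + exp (\<beta> k))
                         * (\<Prod>k\<in>{i..s} - {j}. exp (\<beta> j) - exp (\<beta> k)))"

end

theory Submission
  imports Defs "HOL-Computational_Algebra.Polynomial" "HOL-Real_Asymp.Real_Asymp"
begin

(* In the variable w = e^alpha the integrand of I is, up to the factor (B_i prod_j B_j)^(1/2),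
   the rational function w^k / prod_l (w - x_l), whose poles x_l are -B_j (r <= j <= i) and
   B_j (i <= j <= s): real, nonzero and simple. Partial fractions turn it into
   sum_l A_l w / (w - x_l), so along the line alpha = t + i eps it has the primitive
   sum_l A_l log (w - x_l) in t, for a branch of log continuous on the closed upper half-plane
   without 0. Since k <= n is less than the number n + 1 of poles, sum_l A_l = 0; hence the
   primitive tends to 0 as t -> infinity, and to sum_l A_l log (-x_l) as t -> -infinity, where
   log B_j = beta_j and log (-B_j) = beta_j + pi i. The coefficients A_l are
   (-1)^n (-B_j)^(k-1) F_ji and (-1)^n B_j^(k-1) G_ji; the relation sum_l A_l = 0 identifies
   the two formulas for J, and in J = I + (-1)^(s+i) conj I only the pi i terms survive. *)

section \<open>Partial fractions\<close>

(* The residue of w^m / (prod l:S. w - x l) at its simple pole x j. *)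
definition partial_fraction_coeff :: "nat \<Rightarrow> ('a \<Rightarrow> 'b::field) \<Rightarrow> 'a set \<Rightarrow> 'a \<Rightarrow> 'b" where
  "partial_fraction_coeff m x S j = x j ^ m / (\<Prod>l\<in>S - {j}. x j - x l)"

lemma
  fixes x :: "'a \<Rightarrow> 'b::idom"
  assumes "finite T"
  shows degree_prod_linear: "degree (\<Prod>l\<in>T. [:- x l, 1:]) = card T"
    and lead_coeff_prod_linear: "lead_coeff (\<Prod>l\<in>T. [:- x l, 1:]) = 1"
proof -
  show "degree (\<Prod>l\<in>T. [:- x l, 1:]) = card T"
    using assms by (simp add: degree_prod_eq_sum_degree)
  show "lead_coeff (\<Prod>l\<in>T. [:- x l, 1:]) = 1"
    by (subst lead_coeff_prod) simp
qed

lemma lagrange_interpolation_monom: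
  fixes x :: "'a \<Rightarrow> 'b::field"
  assumes fin: "finite S" and inj: "inj_on x S" and m: "m < card S"
  shows "monom 1 m = (\<Sum>j\<in>S. smult (partial_fraction_coeff m x S j) (\<Prod>l\<in>S - {j}. [:- x l, 1:]))"
    (is "_ = ?L")
proof (rule poly_eqI_degree[of "x ` S"])
  fix w assume "w \<in> x ` S"
  then obtain j where j: "j \<in> S" and w: "w = x j" by blast
  have others:
    "(\<Sum>i\<in>S - {j}. poly (smult (partial_fraction_coeff m x S i) (\<Prod>l\<in>S - {i}. [:- x l, 1:])) w) = 0"
    using fin j by (intro sum.neutral) (auto simp: w poly_prod intro!: prod_zero bexI[of _ j])
  have "(\<Prod>l\<in>S - {j}. x j - x l) \<noteq> 0"
    using fin inj j by (auto simp: inj_on_def)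
  then have "poly (smult (partial_fraction_coeff m x S j) (\<Prod>l\<in>S - {j}. [:- x l, 1:])) w = w ^ m"
    by (simp add: w poly_prod partial_fraction_coeff_def)
  then show "poly (monom 1 m) w = poly ?L w"
    using others by (simp add: poly_sum sum.remove[OF fin j] poly_monom)
next
  show "degree (monom (1::'b) m) < card (x ` S)"
    using m inj by (simp add: degree_monom_eq card_image)
next
  have "degree ?L \<le> card S - 1"
  proof (rule degree_sum_le[OF fin])
    fix j assume "j \<in> S"
    then show "degree (smult (partial_fraction_coeff m x S j) (\<Prod>l\<in>S - {j}. [:- x l, 1:])) \<le> card S - 1"
      using fin by (simp add: degree_prod_linear card_Diff_singleton order.trans[OF degree_smult_le])
  qed
  then show "degree ?L < card (x ` S)"
    using m inj by (simp add: card_image)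
qed

lemma partial_fractions_power:
  fixes x :: "'a \<Rightarrow> 'b::field"
  assumes fin: "finite S" and inj: "inj_on x S" and m: "m < card S" and w: "w \<notin> x ` S"
  shows "w ^ m / (\<Prod>l\<in>S. w - x l) = (\<Sum>j\<in>S. partial_fraction_coeff m x S j / (w - x j))"
proof -
  have "w ^ m = (\<Sum>j\<in>S. partial_fraction_coeff m x S j * (\<Prod>l\<in>S - {j}. w - x l))"
    using arg_cong[OF lagrange_interpolation_monom[OF fin inj m], of "\<lambda>p. poly p w"]
    by (simp add: poly_sum poly_prod poly_monom)
  moreover have "(\<Prod>l\<in>S - {j}. w - x l) / (\<Prod>l\<in>S. w - x l) = 1 / (w - x j)" if "j \<in> S" for j
  proof -
    have "(\<Prod>l\<in>S - {j}. w - x l) \<noteq> 0"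
      using fin w by auto
    then show ?thesis
      using prod.remove[OF fin that, of "\<lambda>l. w - x l"] by simp
  qed
  ultimately show ?thesis
    by (simp add: sum_divide_distrib times_divide_eq_right[symmetric])
qed

lemma partial_fractions_power_Suc:
  fixes x :: "'a \<Rightarrow> 'b::field"
  assumes fin: "finite S" and inj: "inj_on x S" and m: "Suc m < card S" and w: "w \<notin> x ` S"
  shows "w ^ Suc m / (\<Prod>l\<in>S. w - x l) = (\<Sum>j\<in>S. partial_fraction_coeff m x S j * (w / (w - x j)))"
proof -
  have "w ^ Suc m / (\<Prod>l\<in>S. w - x l) = w * (w ^ m / (\<Prod>l\<in>S. w - x l))"
    by simp
  also have "\<dots> = w * (\<Sum>j\<in>S. partial_fraction_coeff m x S j / (w - x j))"
    using m by (simp add: partial_fractions_power[OF fin inj _ w])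
  also have "\<dots> = (\<Sum>j\<in>S. partial_fraction_coeff m x S j * (w / (w - x j)))"
    by (simp add: sum_distrib_left mult.commute)
  finally show ?thesis .
qed

lemma sum_partial_fraction_coeff_eq_0:
  fixes x :: "'a \<Rightarrow> 'b::field"
  assumes fin: "finite S" and inj: "inj_on x S" and m: "Suc m < card S"
  shows "(\<Sum>j\<in>S. partial_fraction_coeff m x S j) = 0"
proof -
  \<comment> \<open>compare the coefficients of \<open>w ^ (card S - 1)\<close> in the Lagrange interpolation of \<open>w ^ m\<close>\<close>
  have monic: "coeff (\<Prod>l\<in>S - {j}. [:- x l, 1:]) (card S - 1) = 1" if "j \<in> S" for j
    using lead_coeff_prod_linear[of "S - {j}" x] degree_prod_linear[of "S - {j}" x] fin that
    by (simp add: card_Diff_singleton)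
  have "m \<noteq> card S - 1"
    using m by linarith
  then have "0 = coeff (monom 1 m) (card S - 1)"
    by simp
  also have "\<dots> = (\<Sum>j\<in>S. partial_fraction_coeff m x S j * coeff (\<Prod>l\<in>S - {j}. [:- x l, 1:]) (card S - 1))"
    using m by (simp add: lagrange_interpolation_monom[OF fin inj] coeff_sum)
  also have "\<dots> = (\<Sum>j\<in>S. partial_fraction_coeff m x S j)"
    using monic by (intro sum.cong) auto
  finally show ?thesis by simp
qed

section \<open>A logarithm continuous on the closed upper half-plane\<close>

(* A branch of the logarithm cut along the negative imaginary axis. It agrees with Ln on the
   closed upper half-plane without 0 but, unlike Ln, is continuous on the negative real axis,
   which the primitive of the integrand approaches as t -> -infinity. *)
definition Ln_upper :: "complex \<Rightarrow> complex" where
  "Ln_upper z = \<i> * of_real pi / 2 + Ln (- \<i> * z)"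

lemma has_field_derivative_Ln_upper:
  assumes "0 \<le> Im z" and "z \<noteq> 0"
  shows "(Ln_upper has_field_derivative inverse z) (at z)"
proof -
  have "((\<lambda>z. \<i> * of_real pi / 2 + Ln (- \<i> * z)) has_field_derivative inverse (- \<i> * z) * (- \<i>)) (at z)"
    using assms by (auto intro!: derivative_eq_intros simp: complex_nonpos_Reals_iff complex_eq_iff)
  then show ?thesis
    using assms by (simp add: Ln_upper_def[abs_def] field_simps)
qed

lemma isCont_Ln_upper: "0 \<le> Im z \<Longrightarrow> z \<noteq> 0 \<Longrightarrow> isCont Ln_upper z"
  using has_field_derivative_Ln_upper DERIV_isCont by blast

lemma Ln_upper_of_real_pos: "0 < r \<Longrightarrow> Ln_upper (of_real r) = of_real (ln r)"
  using Ln_times_of_real[of r "- \<i>"] by (simp add: Ln_upper_def Ln_of_real mult.commute)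

lemma Ln_upper_of_real_neg: "0 < r \<Longrightarrow> Ln_upper (- of_real r) = of_real (ln r) + of_real pi * \<i>"
  using Ln_times_of_real[of r "\<i>"] by (simp add: Ln_upper_def Ln_of_real mult.commute)

lemma Ln_upper_diff:
  assumes a: "0 < Im a" and b: "0 < Im b"
  shows "Ln_upper a - Ln_upper b = Ln (a / b)"
proof -
  have "a \<noteq> 0" "b \<noteq> 0"
    using a b by auto
  define d where "d = Ln (- \<i> * a) - Ln (- \<i> * b)"
  \<comment> \<open>both logarithms have arguments in \<open>(-pi/2, pi/2)\<close>, so \<open>d\<close> is the principal logarithm\<close>
  have "\<bar>Im (Ln (- \<i> * a))\<bar> < pi / 2" "\<bar>Im (Ln (- \<i> * b))\<bar> < pi / 2"
    using a b by (intro Re_Ln_pos_lt_imp; simp)+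
  then have "- pi < Im d" "Im d \<le> pi"
    by (auto simp: d_def)
  moreover have "exp d = a / b"
    using \<open>a \<noteq> 0\<close> \<open>b \<noteq> 0\<close> by (simp add: d_def exp_diff)
  ultimately have "Ln (a / b) = d"
    using Ln_exp by metis
  then show ?thesis
    by (simp add: Ln_upper_def d_def)
qed

section \<open>Integrals along a horizontal line\<close>

lemma integrable_exp_minus_abs: "(\<lambda>t::real. exp (- \<bar>t\<bar>)) integrable_on UNIV"
proof -
  have "(\<lambda>t::real. exp (- \<bar>t\<bar>)) absolutely_integrable_on {0..}"
    by (intro nonnegative_absolutely_integrable_1
        integrable_spike[OF integrable_on_exp_minus_to_infinity[of 1 0] negligible_empty]) auto
  moreover have "uminus ` {..0::real} \<subseteq> {0..}" "uminus ` {0::real..} \<subseteq> {..0}"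
    by auto
  ultimately have "(\<lambda>t::real. exp (- \<bar>t\<bar>)) absolutely_integrable_on {..0}"
    using has_absolute_integral_reflect_real
        [of "{..0}" "{0..}" "\<lambda>t. exp (- \<bar>t\<bar>)" "integral {0..} (\<lambda>t. exp (- \<bar>t\<bar>))"]
    by simp
  then have "(\<lambda>t::real. exp (- \<bar>t\<bar>)) integrable_on {..0} \<union> {0..}"
    using \<open>_ absolutely_integrable_on {0..}\<close>
    by (intro integrable_Un)
      (auto dest: set_lebesgue_integral_eq_integral(1) intro: negligible_subset[of "{0}"])
  moreover have "{..0} \<union> {0..} = (UNIV :: real set)"
    by auto
  ultimately show ?thesis
    by simp
qed

lemma has_integral_UNIV_primitive:
  fixes g \<Phi> :: "real \<Rightarrow> 'a::euclidean_space"
  assumes deriv: "\<And>t. (\<Phi> has_vector_derivative g t) (at t)"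
    and h: "h integrable_on UNIV" and bound: "\<And>t. norm (g t) \<le> h t"
    and top: "(\<Phi> \<longlongrightarrow> a) at_top" and bot: "(\<Phi> \<longlongrightarrow> b) at_bot"
  shows "(g has_integral (a - b)) UNIV"
proof -
  define f where "f m t = (if t \<in> {- real m..real m} then g t else 0)" for m :: nat and t
  have "(g has_integral (\<Phi> (real m) - \<Phi> (- real m))) {- real m..real m}" for m
    by (intro fundamental_theorem_of_calculus) (auto intro: has_vector_derivative_at_within deriv)
  then have f: "(f m has_integral (\<Phi> (real m) - \<Phi> (- real m))) UNIV" for m
    unfolding f_def has_integral_restrict_UNIV .
  have f_lim: "(\<lambda>m. f m t) \<longlonglongrightarrow> g t" for t
  proof (rule tendsto_eventually)
    obtain M :: nat where "\<bar>t\<bar> \<le> real M"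
      using real_arch_simple by blast
    then show "\<forall>\<^sub>F m in sequentially. f m t = g t"
      unfolding eventually_sequentially f_def by (intro exI[of _ M]) auto
  qed
  have "norm (f m t) \<le> h t" for m t
    using bound[of t] order_trans[OF norm_ge_zero bound[of t]] by (simp add: f_def)
  then have "g integrable_on UNIV" and "(\<lambda>m. integral UNIV (f m)) \<longlonglongrightarrow> integral UNIV g"
    using dominated_convergence[of f UNIV h g] f h f_lim by blast+
  moreover have "(\<lambda>m. integral UNIV (f m)) \<longlonglongrightarrow> a - b"
    unfolding integral_unique[OF f]
    by (intro tendsto_diff filterlim_compose[OF top filterlim_real_sequentially]
        filterlim_compose[OF bot] filterlim_compose[OF filterlim_uminus_at_bot_at_top]
        filterlim_real_sequentially)
  ultimately show ?thesis
    using LIMSEQ_unique by (metis has_integral_integrable_integral)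
qed

definition exp_line :: "real \<Rightarrow> real \<Rightarrow> complex" where
  "exp_line \<epsilon> t = exp (of_real t + \<i> * of_real \<epsilon>)"

lemma norm_exp_line [simp]: "norm (exp_line \<epsilon> t) = exp t"
  by (simp add: exp_line_def)

lemma Re_exp_line: "Re (exp_line \<epsilon> t) = exp t * cos \<epsilon>"
  by (simp add: exp_line_def Re_exp)

lemma Im_exp_line: "Im (exp_line \<epsilon> t) = exp t * sin \<epsilon>"
  by (simp add: exp_line_def Im_exp)

lemma exp_line_nonzero [simp]: "exp_line \<epsilon> t \<noteq> 0"
  by (simp add: exp_line_def)

lemma Im_exp_line_pos: "0 < \<epsilon> \<Longrightarrow> \<epsilon> < pi \<Longrightarrow> 0 < Im (exp_line \<epsilon> t)"
  by (simp add: Im_exp_line sin_gt_zero)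

lemma sin_norm_le_norm_exp_line_diff:
  assumes "Im x = 0"
  shows "sin \<epsilon> * norm x \<le> norm (exp_line \<epsilon> t - x)"
proof -
  define a where "a = Re x"
  have "(sin \<epsilon> * \<bar>a\<bar>)\<^sup>2 + (exp t - cos \<epsilon> * a)\<^sup>2 = (exp t * cos \<epsilon> - a)\<^sup>2 + (exp t * sin \<epsilon>)\<^sup>2"
    by (simp add: power_mult_distrib power2_abs sin_squared_eq)
      (simp add: power2_eq_square algebra_simps)
  then have "sin \<epsilon> * \<bar>a\<bar> \<le> sqrt ((exp t * cos \<epsilon> - a)\<^sup>2 + (exp t * sin \<epsilon>)\<^sup>2)"
    by (intro real_le_rsqrt) (metis le_add_same_cancel1 zero_le_power2)
  then show ?thesis
    using assms by (simp add: a_def norm_complex_def Re_exp_line Im_exp_line)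
qed

lemma sin_exp_le_norm_exp_line_diff:
  assumes "Im x = 0"
  shows "sin \<epsilon> * exp t \<le> norm (exp_line \<epsilon> t - x)"
proof -
  have "sin \<epsilon> * exp t \<le> \<bar>Im (exp_line \<epsilon> t - x)\<bar>"
    using assms by (simp add: Im_exp_line) (metis abs_ge_self mult.commute)
  also have "\<dots> \<le> norm (exp_line \<epsilon> t - x)"
    by (rule abs_Im_le_cmod)
  finally show ?thesis .
qed

lemma has_vector_derivative_exp_line: "(exp_line \<epsilon> has_vector_derivative exp_line \<epsilon> t) (at t)"
proof -
  have "((\<lambda>z. exp (z + \<i> * of_real \<epsilon>)) has_field_derivative exp (of_real t + \<i> * of_real \<epsilon>))
          (at (of_real t))"
    by (auto intro!: derivative_eq_intros)
  then show ?thesis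
    unfolding exp_line_def[abs_def] by (rule has_vector_derivative_real_field)
qed

lemma has_vector_derivative_Ln_upper_exp_line_diff:
  assumes "0 < Im (exp_line \<epsilon> t - x)"
  shows "((\<lambda>t. Ln_upper (exp_line \<epsilon> t - x)) has_vector_derivative exp_line \<epsilon> t / (exp_line \<epsilon> t - x))
           (at t)"
proof -
  have "((\<lambda>t. exp_line \<epsilon> t - x) has_vector_derivative exp_line \<epsilon> t) (at t)"
    using has_vector_derivative_exp_line by (auto intro!: derivative_eq_intros)
  moreover have "(Ln_upper has_field_derivative inverse (exp_line \<epsilon> t - x)) (at (exp_line \<epsilon> t - x))"
    using assms by (intro has_field_derivative_Ln_upper) auto
  ultimately show ?thesis
    using field_vector_diff_chain_at by (fastforce simp: o_def divide_inverse)
qed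

lemma norm_exp_line_rational_le:
  fixes x :: "'a \<Rightarrow> complex"
  assumes real: "\<And>l. l \<in> S \<Longrightarrow> Im (x l) = 0" and nz: "\<And>l. l \<in> S \<Longrightarrow> x l \<noteq> 0"
    and k: "1 \<le> k" "k < card S" and \<epsilon>: "0 < \<epsilon>" "\<epsilon> < pi"
  shows "norm (exp_line \<epsilon> t ^ k / (\<Prod>l\<in>S. exp_line \<epsilon> t - x l))
           \<le> (1 / (\<Prod>l\<in>S. sin \<epsilon> * norm (x l)) + 1 / sin \<epsilon> ^ card S) * exp (- \<bar>t\<bar>)"
    (is "?g \<le> (1 / ?D + 1 / ?s) * _")
proof -
  have s: "0 < sin \<epsilon>"
    using \<epsilon> by (simp add: sin_gt_zero)
  have D: "0 < ?D"
    using s nz by (intro prod_pos) auto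
  have g: "?g = exp (real k * t) / (\<Prod>l\<in>S. norm (exp_line \<epsilon> t - x l))"
    by (simp add: norm_divide norm_power prod_norm exp_of_nat_mult)
  show ?thesis
  proof (cases "t \<le> 0")
    case True
    have "?D \<le> (\<Prod>l\<in>S. norm (exp_line \<epsilon> t - x l))"
      using s real by (intro prod_mono) (auto simp: sin_norm_le_norm_exp_line_diff)
    moreover have "real k * t \<le> - \<bar>t\<bar>"
      using True k by (simp add: mult_le_cancel_right2)
    ultimately have "?g \<le> exp (- \<bar>t\<bar>) / ?D"
      unfolding g using D by (intro frac_le) auto
    also have "\<dots> \<le> (1 / ?D + 1 / ?s) * exp (- \<bar>t\<bar>)"
      using s by (simp add: distrib_right)
    finally show ?thesis .
  next
    case False
    have "(\<Prod>l\<in>S. sin \<epsilon> * exp t) \<le> (\<Prod>l\<in>S. norm (exp_line \<epsilon> t - x l))"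
      using s real by (intro prod_mono) (auto simp: sin_exp_le_norm_exp_line_diff)
    then have "?s * exp (real (card S) * t) \<le> (\<Prod>l\<in>S. norm (exp_line \<epsilon> t - x l))"
      by (simp add: power_mult_distrib exp_of_nat_mult)
    moreover have "real k * t \<le> real (card S) * t - \<bar>t\<bar>"
      using False k mult_right_mono[of "real k + 1" "real (card S)" t] by (simp add: algebra_simps)
    ultimately have "?g \<le> exp (real (card S) * t - \<bar>t\<bar>) / (?s * exp (real (card S) * t))"
      unfolding g using s by (intro frac_le) auto
    also have "\<dots> = exp (- \<bar>t\<bar>) / ?s"
      by (simp add: exp_diff exp_minus field_simps)
    also have "\<dots> \<le> (1 / ?D + 1 / ?s) * exp (- \<bar>t\<bar>)"
      using D by (simp add: distrib_right)
    finally show ?thesis .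
  qed
qed

lemma tendsto_exp_line_at_bot: "(exp_line \<epsilon> \<longlongrightarrow> 0) at_bot"
  by (rule tendsto_norm_zero_cancel) (simp, real_asymp)

lemma tendsto_inverse_exp_line_at_top: "((\<lambda>t. inverse (exp_line \<epsilon> t)) \<longlongrightarrow> 0) at_top"
  by (rule tendsto_norm_zero_cancel) (simp add: norm_inverse, real_asymp)

lemma tendsto_Ln_upper_exp_line_diff_at_bot:
  assumes "Im x = 0" and "x \<noteq> 0"
  shows "((\<lambda>t. Ln_upper (exp_line \<epsilon> t - x)) \<longlongrightarrow> Ln_upper (- x)) at_bot"
proof -
  have "isCont Ln_upper (- x)"
    using assms by (intro isCont_Ln_upper) auto
  moreover have "((\<lambda>t. exp_line \<epsilon> t - x) \<longlongrightarrow> - x) at_bot"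
    using tendsto_diff[OF tendsto_exp_line_at_bot tendsto_const] by simp
  ultimately show ?thesis
    by (rule isCont_tendsto_compose)
qed

lemma tendsto_sum_Ln_upper_exp_line_diff_at_top:
  assumes sum_A: "(\<Sum>l\<in>S. A l) = 0" and real: "\<And>l. l \<in> S \<Longrightarrow> Im (x l) = 0"
    and \<epsilon>: "0 < \<epsilon>" "\<epsilon> < pi"
  shows "((\<lambda>t. \<Sum>l\<in>S. A l * Ln_upper (exp_line \<epsilon> t - x l)) \<longlongrightarrow> 0) at_top"
proof -
  \<comment> \<open>since the \<open>A l\<close> sum to zero, \<open>Ln_upper (exp_line \<epsilon> t)\<close> may be subtracted from every logarithm\<close>
  have "(\<Sum>l\<in>S. A l * Ln_upper (exp_line \<epsilon> t - x l))
          = (\<Sum>l\<in>S. A l * Ln (1 - x l * inverse (exp_line \<epsilon> t)))" for t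
  proof -
    have "(\<Sum>l\<in>S. A l * Ln_upper (exp_line \<epsilon> t - x l))
            = (\<Sum>l\<in>S. A l * (Ln_upper (exp_line \<epsilon> t - x l) - Ln_upper (exp_line \<epsilon> t)))"
      using sum_A by (simp add: right_diff_distrib sum_subtractf flip: sum_distrib_right)
    also have "\<dots> = (\<Sum>l\<in>S. A l * Ln (1 - x l * inverse (exp_line \<epsilon> t)))"
    proof (rule sum.cong[OF refl])
      fix l assume "l \<in> S"
      then have "Ln_upper (exp_line \<epsilon> t - x l) - Ln_upper (exp_line \<epsilon> t)
                   = Ln ((exp_line \<epsilon> t - x l) / exp_line \<epsilon> t)"
        using Im_exp_line_pos[OF \<epsilon>] real by (intro Ln_upper_diff) auto
      also have "(exp_line \<epsilon> t - x l) / exp_line \<epsilon> t = 1 - x l * inverse (exp_line \<epsilon> t)"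
        by (simp add: field_simps)
      finally show "A l * (Ln_upper (exp_line \<epsilon> t - x l) - Ln_upper (exp_line \<epsilon> t))
                      = A l * Ln (1 - x l * inverse (exp_line \<epsilon> t))"
        by simp
    qed
    finally show ?thesis .
  qed
  moreover have "((\<lambda>t. \<Sum>l\<in>S. A l * Ln (1 - x l * inverse (exp_line \<epsilon> t)))
                   \<longlongrightarrow> (\<Sum>l\<in>S. A l * Ln (1 - x l * 0))) at_top"
    by (intro tendsto_intros isCont_tendsto_compose[OF continuous_at_Ln]
        tendsto_inverse_exp_line_at_top)
      (simp add: complex_nonpos_Reals_iff)
  ultimately show ?thesis
    by simp
qed

lemma has_integral_exp_line_rational:
  fixes x :: "'a \<Rightarrow> complex"
  assumes fin: "finite S" and inj: "inj_on x S" and real: "\<And>l. l \<in> S \<Longrightarrow> Im (x l) = 0"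
    and nz: "\<And>l. l \<in> S \<Longrightarrow> x l \<noteq> 0" and k: "1 \<le> k" "k < card S" and \<epsilon>: "0 < \<epsilon>" "\<epsilon> < pi"
  shows "((\<lambda>t. exp_line \<epsilon> t ^ k / (\<Prod>l\<in>S. exp_line \<epsilon> t - x l)) has_integral
           - (\<Sum>l\<in>S. partial_fraction_coeff (k - 1) x S l * Ln_upper (- x l))) UNIV"
proof -
  define A where "A = partial_fraction_coeff (k - 1) x S"
  have upper: "0 < Im (exp_line \<epsilon> t - x l)" if "l \<in> S" for t l
    using Im_exp_line_pos[OF \<epsilon>] real[OF that] by simp
  have pf: "exp_line \<epsilon> t ^ k / (\<Prod>l\<in>S. exp_line \<epsilon> t - x l)
              = (\<Sum>l\<in>S. A l * (exp_line \<epsilon> t / (exp_line \<epsilon> t - x l)))" for t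
  proof -
    have "exp_line \<epsilon> t \<notin> x ` S"
      using real Im_exp_line_pos[OF \<epsilon>, of t] by auto
    then show ?thesis
      using partial_fractions_power_Suc[OF fin inj, of "k - 1"] k by (simp add: A_def)
  qed
  have "((\<lambda>t. exp_line \<epsilon> t ^ k / (\<Prod>l\<in>S. exp_line \<epsilon> t - x l)) has_integral
          0 - (\<Sum>l\<in>S. A l * Ln_upper (- x l))) UNIV"
  proof (rule has_integral_UNIV_primitive)
    show "((\<lambda>t. \<Sum>l\<in>S. A l * Ln_upper (exp_line \<epsilon> t - x l)) has_vector_derivative
            exp_line \<epsilon> t ^ k / (\<Prod>l\<in>S. exp_line \<epsilon> t - x l)) (at t)" for t
      unfolding pf using upper
      by (intro has_vector_derivative_sum has_vector_derivative_mult_right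
          has_vector_derivative_Ln_upper_exp_line_diff)
    show "(\<lambda>t. (1 / (\<Prod>l\<in>S. sin \<epsilon> * norm (x l)) + 1 / sin \<epsilon> ^ card S) * exp (- \<bar>t\<bar>)) integrable_on UNIV"
      using integrable_cmul[OF integrable_exp_minus_abs] by simp
    show "norm (exp_line \<epsilon> t ^ k / (\<Prod>l\<in>S. exp_line \<epsilon> t - x l))
            \<le> (1 / (\<Prod>l\<in>S. sin \<epsilon> * norm (x l)) + 1 / sin \<epsilon> ^ card S) * exp (- \<bar>t\<bar>)" for t
      by (rule norm_exp_line_rational_le[OF real nz k \<epsilon>])
    show "((\<lambda>t. \<Sum>l\<in>S. A l * Ln_upper (exp_line \<epsilon> t - x l)) \<longlongrightarrow> 0) at_top"
      using k by (intro tendsto_sum_Ln_upper_exp_line_diff_at_top real \<epsilon>)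
        (simp add: A_def sum_partial_fraction_coeff_eq_0[OF fin inj])
    show "((\<lambda>t. \<Sum>l\<in>S. A l * Ln_upper (exp_line \<epsilon> t - x l)) \<longlongrightarrow> (\<Sum>l\<in>S. A l * Ln_upper (- x l))) at_bot"
      by (intro tendsto_sum tendsto_mult_left tendsto_Ln_upper_exp_line_diff_at_bot real nz)
  qed
  then show ?thesis
    by (simp add: A_def)
qed

section \<open>The integrals I and J\<close>

lemma recip_2cosh_half_diff:
  fixes z b :: complex
  shows "1 / (2 * cosh ((z - b) / 2)) = exp (z / 2) * exp (b / 2) / (exp z + exp b)"
proof -
  have args: "z / 2 + b / 2 + (z - b) / 2 = z" "z / 2 + b / 2 + - ((z - b) / 2) = b"
    by (simp_all add: field_simps)
  have "exp (z / 2) * exp (b / 2) * (2 * cosh ((z - b) / 2))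
          = exp (z / 2 + b / 2 + (z - b) / 2) + exp (z / 2 + b / 2 + - ((z - b) / 2))"
    by (simp only: cosh_field_def exp_add) (simp add: field_simps)
  then have "exp (z / 2) * exp (b / 2) * (2 * cosh ((z - b) / 2)) = exp z + exp b"
    by (simp only: args)
  then show ?thesis
    by (metis exp_not_eq_zero mult_eq_0_iff nonzero_mult_divide_mult_cancel_left mult_1_right)
qed

lemma recip_2sinh_half_diff:
  fixes z b :: complex
  shows "1 / (2 * sinh ((z - b) / 2)) = exp (z / 2) * exp (b / 2) / (exp z - exp b)"
proof -
  have args: "z / 2 + b / 2 + (z - b) / 2 = z" "z / 2 + b / 2 + - ((z - b) / 2) = b"
    by (simp_all add: field_simps)
  have "exp (z / 2) * exp (b / 2) * (2 * sinh ((z - b) / 2))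
          = exp (z / 2 + b / 2 + (z - b) / 2) - exp (z / 2 + b / 2 + - ((z - b) / 2))"
    by (simp only: sinh_field_def exp_add) (simp add: field_simps)
  then have "exp (z / 2) * exp (b / 2) * (2 * sinh ((z - b) / 2)) = exp z - exp b"
    by (simp only: args)
  then show ?thesis
    by (metis exp_not_eq_zero mult_eq_0_iff nonzero_mult_divide_mult_cancel_left mult_1_right)
qed

lemma prod_recip_2cosh_half_diff:
  fixes \<beta> :: "'a \<Rightarrow> real" and z :: complex
  assumes "finite A"
  shows "(\<Prod>j\<in>A. 1 / (2 * cosh ((z - of_real (\<beta> j)) / 2)))
           = exp (z / 2) ^ card A * exp (of_real (\<Sum>j\<in>A. \<beta> j) / 2) / (\<Prod>j\<in>A. exp z + of_real (exp (\<beta> j)))"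
  using assms
  by (simp add: recip_2cosh_half_diff prod_dividef prod.distrib exp_sum sum_divide_distrib
      exp_of_real of_real_sum)

lemma prod_recip_2sinh_half_diff:
  fixes \<beta> :: "'a \<Rightarrow> real" and z :: complex
  assumes "finite A"
  shows "(\<Prod>j\<in>A. 1 / (2 * sinh ((z - of_real (\<beta> j)) / 2)))
           = exp (z / 2) ^ card A * exp (of_real (\<Sum>j\<in>A. \<beta> j) / 2) / (\<Prod>j\<in>A. exp z - of_real (exp (\<beta> j)))"
  using assms
  by (simp add: recip_2sinh_half_diff prod_dividef prod.distrib exp_sum sum_divide_distrib
      exp_of_real of_real_sum)

(* The poles of the integrand in the variable w = e^alpha: -B j from the cosh factors
   (r <= j <= i) and B j from the sinh factors (i <= j <= s). Since j = i occurs in both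
   products, the poles are indexed by the disjoint union {r..i} <+> {i..s}. *)
definition pole :: "(int \<Rightarrow> real) \<Rightarrow> int + int \<Rightarrow> complex" where
  "pole \<beta> = case_sum (\<lambda>j. - of_real (exp (\<beta> j))) (\<lambda>j. of_real (exp (\<beta> j)))"

lemma pole_Inl [simp]: "pole \<beta> (Inl j) = - of_real (exp (\<beta> j))"
  and pole_Inr [simp]: "pole \<beta> (Inr j) = of_real (exp (\<beta> j))"
  by (simp_all add: pole_def)

lemma card_Icc_Plus_Icc: "r \<le> i \<Longrightarrow> i \<le> s \<Longrightarrow> card ({r..i} <+> {i..s}) = nn r s + 1"
  by (simp add: card_Plus nn_def)

lemma inj_on_pole:
  assumes "inj_on \<beta> {r..s}" and "r \<le> i" and "i \<le> s"
  shows "inj_on (pole \<beta>) ({r..i} <+> {i..s})"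
proof (rule inj_onI)
  have opposite: "- complex_of_real (exp a) \<noteq> of_real (exp b)" for a b
  proof
    assume "- complex_of_real (exp a) = of_real (exp b)"
    then have "- exp a = exp b"
      by (metis of_real_eq_iff of_real_minus)
    then show False
      using exp_gt_zero[of a] exp_gt_zero[of b] by linarith
  qed
  fix l l' assume "l \<in> {r..i} <+> {i..s}" "l' \<in> {r..i} <+> {i..s}" "pole \<beta> l = pole \<beta> l'"
  then show "l = l'"
    using assms opposite opposite[symmetric] by (auto simp: inj_on_def)
qed

lemma sum_Icc_overlap:
  fixes f :: "int \<Rightarrow> 'a::comm_monoid_add"
  assumes "r \<le> i" and "i \<le> s"
  shows "(\<Sum>j\<in>{r..i}. f j) + (\<Sum>j\<in>{i..s}. f j) = f i + (\<Sum>j\<in>{r..s}. f j)"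
proof -
  have "{r..i} \<union> {i..s} = {r..s}" "{r..i} \<inter> {i..s} = {i}"
    using assms by auto
  then show ?thesis
    using sum.union_inter[of "{r..i}" "{i..s}" f] by (simp add: add.commute)
qed

lemma integrandI_eq:
  assumes "r \<le> i" and "i \<le> s"
  shows "integrandI r s \<beta> k i z = of_real (exp (\<beta> i / 2) * exp ((\<Sum>j\<in>{r..s}. \<beta> j) / 2))
           * (exp z ^ k / (\<Prod>l\<in>{r..i} <+> {i..s}. exp z - pole \<beta> l))"
proof -
  have card: "card {r..i} + card {i..s} = nn r s + 1"
    using assms by (simp add: nn_def)
  have sum: "complex_of_real (\<Sum>j\<in>{r..i}. \<beta> j) + of_real (\<Sum>j\<in>{i..s}. \<beta> j)
                   = of_real (\<beta> i + (\<Sum>j\<in>{r..s}. \<beta> j))"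
    unfolding of_real_add[symmetric] sum_Icc_overlap[OF assms] ..
  have expo:
    "exp (of_real (real k - (real (nn r s) + 1) / 2) * z) * exp (z / 2) ^ (nn r s + 1) = exp z ^ k"
  proof -
    have "of_real (real k - (real (nn r s) + 1) / 2) * z + of_nat (nn r s + 1) * (z / 2) = of_nat k * z"
      by (simp add: field_simps)
    then show ?thesis
      by (simp only: exp_of_nat_mult[symmetric] exp_add[symmetric])
  qed
  have "integrandI r s \<beta> k i z
          = exp (of_real (real k - (real (nn r s) + 1) / 2) * z)
            * exp (z / 2) ^ (card {r..i} + card {i..s})
            * exp ((complex_of_real (\<Sum>j\<in>{r..i}. \<beta> j) + of_real (\<Sum>j\<in>{i..s}. \<beta> j)) / 2)
            / ((\<Prod>j\<in>{r..i}. exp z + of_real (exp (\<beta> j))) * (\<Prod>j\<in>{i..s}. exp z - of_real (exp (\<beta> j))))"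
    by (simp add: integrandI_def prod_recip_2cosh_half_diff prod_recip_2sinh_half_diff power_add
        add_divide_distrib exp_add)
  also have "\<dots> = of_real (exp (\<beta> i / 2) * exp ((\<Sum>j\<in>{r..s}. \<beta> j) / 2))
                    * (exp z ^ k / (\<Prod>l\<in>{r..i} <+> {i..s}. exp z - pole \<beta> l))"
    unfolding card sum expo by (simp add: prod.Plus o_def add_divide_distrib exp_add flip: exp_of_real)
  finally show ?thesis .
qed

lemma divide_minus_one_power_mult: "x / ((-1) ^ n * y) = (-1) ^ n * x / (y :: 'a :: field)"
  by (cases "even n") simp_all

lemma partial_fraction_coeff_pole_Inl:
  assumes "j \<in> {r..i}" and "i \<le> s"
  shows "partial_fraction_coeff m (pole \<beta>) ({r..i} <+> {i..s}) (Inl j)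
           = (-1) ^ nn r s * of_real ((- exp (\<beta> j)) ^ m * Fco r s \<beta> j i)"
proof -
  have "({r..i} <+> {i..s}) - {Inl j} = ({r..i} - {j}) <+> {i..s}"
    by auto
  then have "(\<Prod>l\<in>({r..i} <+> {i..s}) - {Inl j}. pole \<beta> (Inl j) - pole \<beta> l)
      = (\<Prod>l\<in>{r..i} - {j}. - of_real (exp (\<beta> j) - exp (\<beta> l)))
        * (\<Prod>l\<in>{i..s}. - of_real (exp (\<beta> j) + exp (\<beta> l)))"
    by (simp add: prod.Plus o_def)
  also have "\<dots> = (-1) ^ (card ({r..i} - {j}) + card {i..s})
                    * of_real ((\<Prod>l\<in>{r..i} - {j}. exp (\<beta> j) - exp (\<beta> l))
                               * (\<Prod>l\<in>{i..s}. exp (\<beta> j) + exp (\<beta> l)))"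
    by (simp only: prod_uminus power_add of_real_mult of_real_prod mult_ac)
  also have "card ({r..i} - {j}) + card {i..s} = nn r s"
    using assms by (simp add: card_Diff_singleton nn_def; arith)
  finally show ?thesis
    by (simp add: partial_fraction_coeff_def Fco_def divide_minus_one_power_mult)
qed

lemma partial_fraction_coeff_pole_Inr:
  assumes "j \<in> {i..s}"
  shows "partial_fraction_coeff m (pole \<beta>) ({r..i} <+> {i..s}) (Inr j)
           = (-1) ^ nn r s * of_real (exp (\<beta> j) ^ m * Gco r s \<beta> j i)"
proof -
  have "({r..i} <+> {i..s}) - {Inr j} = {r..i} <+> ({i..s} - {j})"
    by auto
  then have "(\<Prod>l\<in>({r..i} <+> {i..s}) - {Inr j}. pole \<beta> (Inr j) - pole \<beta> l)
      = of_real ((\<Prod>l\<in>{r..i}. exp (\<beta> j) + exp (\<beta> l))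
                 * (\<Prod>l\<in>{i..s} - {j}. exp (\<beta> j) - exp (\<beta> l)))"
    by (simp add: prod.Plus o_def)
  then show ?thesis
    by (simp add: partial_fraction_coeff_def Gco_def)
qed

lemma has_integral_integrandI:
  assumes \<beta>: "inj_on \<beta> {r..s}" and k: "1 \<le> k" "k \<le> nn r s" and i: "r \<le> i" "i \<le> s"
    and \<epsilon>: "0 < \<epsilon>" "\<epsilon> < pi"
  shows "((\<lambda>t. integrandI r s \<beta> k i (of_real t + \<i> * of_real \<epsilon>)) has_integral
           - of_real (exp (\<beta> i / 2) * exp ((\<Sum>j\<in>{r..s}. \<beta> j) / 2))
             * (\<Sum>l\<in>{r..i} <+> {i..s}. partial_fraction_coeff (k - 1) (pole \<beta>) ({r..i} <+> {i..s}) l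
                                          * Ln_upper (- pole \<beta> l))) UNIV"
proof -
  have "((\<lambda>t. exp_line \<epsilon> t ^ k / (\<Prod>l\<in>{r..i} <+> {i..s}. exp_line \<epsilon> t - pole \<beta> l)) has_integral
          - (\<Sum>l\<in>{r..i} <+> {i..s}. partial_fraction_coeff (k - 1) (pole \<beta>) ({r..i} <+> {i..s}) l
                                          * Ln_upper (- pole \<beta> l))) UNIV"
    using k i by (intro has_integral_exp_line_rational inj_on_pole[OF \<beta>] \<epsilon>)
      (auto simp: card_Icc_Plus_Icc)
  from has_integral_mult_right[OF this]
  show ?thesis
    by (simp add: integrandI_eq[OF i] exp_line_def)
qed

lemma sum_pole_coeff_Ln_upper:
  assumes "r \<le> i" and "i \<le> s"
  shows "(\<Sum>l\<in>{r..i} <+> {i..s}.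
             partial_fraction_coeff m (pole \<beta>) ({r..i} <+> {i..s}) l * Ln_upper (- pole \<beta> l))
           = (-1) ^ nn r s
             * ((\<Sum>j\<in>{r..i}. complex_of_real ((- exp (\<beta> j)) ^ m * \<beta> j * Fco r s \<beta> j i))
                + (\<Sum>j\<in>{i..s}. complex_of_real (exp (\<beta> j) ^ m)
                      * (complex_of_real (\<beta> j) + complex_of_real pi * \<i>)
                      * complex_of_real (Gco r s \<beta> j i)))"
proof -
  let ?A = "partial_fraction_coeff m (pole \<beta>) ({r..i} <+> {i..s})"
  have "?A (Inl j) * Ln_upper (- pole \<beta> (Inl j))
          = (-1) ^ nn r s * complex_of_real ((- exp (\<beta> j)) ^ m * \<beta> j * Fco r s \<beta> j i)"
    if "j \<in> {r..i}" for j
    using that assms by (simp add: partial_fraction_coeff_pole_Inl Ln_upper_of_real_pos)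
  moreover have "?A (Inr j) * Ln_upper (- pole \<beta> (Inr j))
          = (-1) ^ nn r s * (complex_of_real (exp (\<beta> j) ^ m)
              * (complex_of_real (\<beta> j) + complex_of_real pi * \<i>) * complex_of_real (Gco r s \<beta> j i))"
    if "j \<in> {i..s}" for j
    using that by (simp add: partial_fraction_coeff_pole_Inr Ln_upper_of_real_neg)
  ultimately show ?thesis
    unfolding sum.Plus[OF finite_atLeastAtMost_int finite_atLeastAtMost_int] o_def
      distrib_left sum_distrib_left
    by (intro arg_cong2[where f = "(+)"] sum.cong) auto
qed

lemma sum_Fco_eq_minus_sum_Gco:
  assumes "inj_on \<beta> {r..s}" and "1 \<le> k" and "k \<le> nn r s" and "r \<le> i" and "i \<le> s"
  shows "(\<Sum>j\<in>{r..i}. (- exp (\<beta> j)) ^ (k - 1) * Fco r s \<beta> j i)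
           = - (\<Sum>j\<in>{i..s}. exp (\<beta> j) ^ (k - 1) * Gco r s \<beta> j i)"
proof -
  have "(-1) ^ nn r s * complex_of_real ((\<Sum>j\<in>{r..i}. (- exp (\<beta> j)) ^ (k - 1) * Fco r s \<beta> j i)
          + (\<Sum>j\<in>{i..s}. exp (\<beta> j) ^ (k - 1) * Gco r s \<beta> j i))
        = (\<Sum>l\<in>{r..i} <+> {i..s}. partial_fraction_coeff (k - 1) (pole \<beta>) ({r..i} <+> {i..s}) l)"
    using assms by (simp add: sum.Plus partial_fraction_coeff_pole_Inl partial_fraction_coeff_pole_Inr
        sum_distrib_left distrib_left)
  also have "\<dots> = 0"
    using assms by (intro sum_partial_fraction_coeff_eq_0 inj_on_pole) (auto simp: card_Icc_Plus_Icc)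
  finally have "(-1) ^ nn r s * complex_of_real ((\<Sum>j\<in>{r..i}. (- exp (\<beta> j)) ^ (k - 1) * Fco r s \<beta> j i)
          + (\<Sum>j\<in>{i..s}. exp (\<beta> j) ^ (k - 1) * Gco r s \<beta> j i)) = 0" .
  then show ?thesis
    by (simp only: mult_eq_0_iff power_eq_0_iff of_real_eq_0_iff) (auto simp: add_eq_0_iff)
qed

lemma minus_one_powi_eq_i_powi: "(-1::complex) powi m = \<i> powi (2 * m)"
  by (simp add: power_int_mult)

lemma i_powi_add_4: "\<i> powi (a + 4) = \<i> powi a"
  by (simp add: power_int_add)

lemma i_powi_shift:
  assumes "r \<le> s"
  shows "\<i> powi (2 * r - s + 1 - i) * - ((-1) ^ nn r s) = \<i> powi (s + 1 - i)"
proof -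
  have "(-1::complex) ^ nn r s = (-1) powi (s - r + 1)"
    using assms by (simp add: nn_def power_int_def)
  then have "- ((-1) ^ nn r s) = \<i> powi (2 * (s - r + 1)) * \<i> powi 2"
    by (simp add: minus_one_powi_eq_i_powi)
  then have "\<i> powi (2 * r - s + 1 - i) * - ((-1) ^ nn r s)
               = \<i> powi (2 * r - s + 1 - i) * \<i> powi (2 * (s - r + 1)) * \<i> powi 2"
    by (simp only: mult.assoc)
  also have "\<dots> = \<i> powi (2 * r - s + 1 - i + 2 * (s - r + 1) + 2)"
    by (simp only: power_int_add complex_i_not_zero simp_thms)
  also have "\<dots> = \<i> powi ((s + 1 - i) + 4)"
    by (intro arg_cong[where f = "power_int \<i>"]) (simp add: algebra_simps)
  finally show ?thesis
    by (simp only: i_powi_add_4)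
qed

lemma add_minus_one_powi_cnj:
  fixes c X Y :: real and s i :: int
  assumes I: "I = \<i> powi (s + 1 - i) / of_real pi * of_real c * (of_real X + \<i> * of_real (pi * Y))"
  shows "I + (-1) powi (s + i) * cnj I = - 2 * \<i> powi (s - i) * of_real c * of_real Y"
proof -
  define u where "u = \<i> powi (s + 1 - i)"
  have cnj_u: "cnj u = (-1) powi (s + 1 - i) * u"
    by (simp add: u_def flip: power_int_mult_distrib)
  have sign: "(-1::complex) powi (s + i) * (-1) powi (s + 1 - i) = -1"
  proof -
    have "(-1::complex) powi (s + i) * (-1) powi (s + 1 - i) = (-1) powi (2 * s) * (-1)"
      by (simp add: algebra_simps flip: power_int_add)
    then show ?thesis
      by (simp add: power_int_mult)
  qed
  have "\<i> * u = \<i> powi (1 + (s + 1 - i))"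
    by (simp only: u_def power_int_add complex_i_not_zero simp_thms power_int_1_right)
  also have "\<dots> = \<i> powi ((s - i) + 2)"
    by (intro arg_cong[where f = "power_int \<i>"]) linarith
  also have "\<dots> = - (\<i> powi (s - i))"
    by (simp only: power_int_add complex_i_not_zero simp_thms) simp
  finally have i_u: "\<i> * u = - (\<i> powi (s - i))" .
  have "cnj I = cnj u / of_real pi * of_real c * (of_real X - \<i> * of_real (pi * Y))"
    unfolding I u_def[symmetric] by simp
  then have "I + (-1) powi (s + i) * cnj I
          = u / of_real pi * of_real c * (of_real X + \<i> * of_real (pi * Y))
            + ((-1) powi (s + i) * (-1) powi (s + 1 - i)) * u / of_real pi * of_real c
              * (of_real X - \<i> * of_real (pi * Y))"
    unfolding I u_def[symmetric] cnj_u by (simp add: algebra_simps)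
  also have "\<dots> = 2 * (\<i> * u) * of_real c * of_real Y"
    unfolding sign by (simp add: field_simps)
  finally show ?thesis
    unfolding i_u by simp
qed

lemma Ival_eq:
  assumes "inj_on \<beta> {r..s}" and "1 \<le> k" and "k \<le> nn r s" and "r \<le> i" and "i \<le> s"
    and "0 < \<epsilon>" and "\<epsilon> < pi"
  shows "Ival r s \<beta> \<epsilon> k i =
           \<i> powi (s + 1 - i) / complex_of_real pi
           * complex_of_real (exp (\<beta> i / 2)) * complex_of_real (exp ((\<Sum>j\<in>{r..s}. \<beta> j) / 2))
           * ((\<Sum>j\<in>{r..i}. complex_of_real ((- exp (\<beta> j)) ^ (k - 1) * \<beta> j * Fco r s \<beta> j i))
              + (\<Sum>j\<in>{i..s}. complex_of_real (exp (\<beta> j) ^ (k - 1))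
                    * (complex_of_real (\<beta> j) + complex_of_real pi * \<i>)
                    * complex_of_real (Gco r s \<beta> j i)))"
    (is "_ = _ / _ * ?c1 * ?c2 * ?T")
proof -
  have "integral UNIV (\<lambda>t. integrandI r s \<beta> k i (of_real t + \<i> * of_real \<epsilon>))
          = - (?c1 * ?c2) * ((-1) ^ nn r s * ?T)"
    using integral_unique[OF has_integral_integrandI[OF assms]] sum_pole_coeff_Ln_upper[OF assms(4,5)]
    by simp
  moreover have "2 * a * (- (c1 * c2) * (m * T) / of_real (2 * pi)) = a * - m / of_real pi * c1 * c2 * T"
    for a c1 c2 m T :: complex
    by (simp add: field_simps)
  ultimately have "Ival r s \<beta> \<epsilon> k i
                     = \<i> powi (2 * r - s + 1 - i) * - ((-1) ^ nn r s) / of_real pi * ?c1 * ?c2 * ?T"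
    unfolding Ival_def by (simp only:)
  then show ?thesis
    using assms by (simp only: i_powi_shift)
qed

lemma Jval_eq:
  assumes "inj_on \<beta> {r..s}" and "1 \<le> k" and "k \<le> nn r s" and "r \<le> i" and "i \<le> s"
    and "0 < \<epsilon>" and "\<epsilon> < pi"
  shows "Jval r s \<beta> \<epsilon> k i =
           - 2 * \<i> powi (s - i)
           * complex_of_real (exp (\<beta> i / 2)) * complex_of_real (exp ((\<Sum>j\<in>{r..s}. \<beta> j) / 2))
           * complex_of_real (\<Sum>j\<in>{i..s}. exp (\<beta> j) ^ (k - 1) * Gco r s \<beta> j i)"
proof -
  define X where "X = (\<Sum>j\<in>{r..i}. (- exp (\<beta> j)) ^ (k - 1) * \<beta> j * Fco r s \<beta> j i)
                      + (\<Sum>j\<in>{i..s}. exp (\<beta> j) ^ (k - 1) * \<beta> j * Gco r s \<beta> j i)"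
  define Y where "Y = (\<Sum>j\<in>{i..s}. exp (\<beta> j) ^ (k - 1) * Gco r s \<beta> j i)"
  have "(\<Sum>j\<in>{r..i}. complex_of_real ((- exp (\<beta> j)) ^ (k - 1) * \<beta> j * Fco r s \<beta> j i))
          + (\<Sum>j\<in>{i..s}. complex_of_real (exp (\<beta> j) ^ (k - 1))
                * (complex_of_real (\<beta> j) + complex_of_real pi * \<i>) * complex_of_real (Gco r s \<beta> j i))
        = of_real X + \<i> * of_real (pi * Y)"
    by (simp add: X_def Y_def algebra_simps sum.distrib sum_distrib_left)
  then have "Ival r s \<beta> \<epsilon> k i = \<i> powi (s + 1 - i) / of_real pi
               * of_real (exp (\<beta> i / 2) * exp ((\<Sum>j\<in>{r..s}. \<beta> j) / 2))
               * (of_real X + \<i> * of_real (pi * Y))"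
    using Ival_eq[OF assms] by simp
  from add_minus_one_powi_cnj[OF this] show ?thesis
    by (simp add: Jval_def Y_def)
qed

theorem propositionE1:
  fixes r s i :: int and \<beta> :: "int \<Rightarrow> real" and k :: nat and \<epsilon> :: real
  assumes "r \<le> s" and "inj_on \<beta> {r..s}"
    and "1 \<le> k" and "k \<le> nn r s"
    and "r \<le> i" and "i \<le> s"
    and "0 < \<epsilon>" and "\<epsilon> < pi"
  shows "(\<lambda>t::real. integrandI r s \<beta> k i (complex_of_real t + \<i> * complex_of_real \<epsilon>))
           integrable_on UNIV
         \<and> Ival r s \<beta> \<epsilon> k i =
           \<i> powi (s + 1 - i) / complex_of_real pi
           * complex_of_real (exp (\<beta> i / 2)) * complex_of_real (exp ((\<Sum>j\<in>{r..s}. \<beta> j) / 2))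
           * ((\<Sum>j\<in>{r..i}. complex_of_real ((- exp (\<beta> j)) ^ (k - 1) * \<beta> j * Fco r s \<beta> j i))
              + (\<Sum>j\<in>{i..s}. complex_of_real (exp (\<beta> j) ^ (k - 1))
                    * (complex_of_real (\<beta> j) + complex_of_real pi * \<i>)
                    * complex_of_real (Gco r s \<beta> j i)))
         \<and> Jval r s \<beta> \<epsilon> k i =
           2 * \<i> powi (s - i)
           * complex_of_real (exp (\<beta> i / 2)) * complex_of_real (exp ((\<Sum>j\<in>{r..s}. \<beta> j) / 2))
           * complex_of_real (\<Sum>j\<in>{r..i}. (- exp (\<beta> j)) ^ (k - 1) * Fco r s \<beta> j i)
         \<and> Jval r s \<beta> \<epsilon> k i =
           - 2 * \<i> powi (s - i)
           * complex_of_real (exp (\<beta> i / 2)) * complex_of_real (exp ((\<Sum>j\<in>{r..s}. \<beta> j) / 2))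
           * complex_of_real (\<Sum>j\<in>{i..s}. exp (\<beta> j) ^ (k - 1) * Gco r s \<beta> j i)"
  using has_integral_integrable[OF has_integral_integrandI[OF assms(2-8)]] Ival_eq[OF assms(2-8)]
    Jval_eq[OF assms(2-8)] sum_Fco_eq_minus_sum_Gco[OF assms(2-6)]
  by simp

end
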